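(* For every integer $n\ge 3$ with $n\equiv 1$ or $n\equiv 3\pmod 4$, $\gamma_p(C_n\times C_4)=\gamma_t(C_n\times C_4)=n+1$.
   Context: All graphs are finite, simple and undirected. $C_n$ denotes the cycle of order $n$ and $G\times H$ the Cartesian product of graphs. For a graph $G$ without isolated vertices: a set $D\subseteq V(G)$ is a total dominating set if every vertex of $G$ (including those in $D$) has a neighbour in $D$; $\gamma_t(G)$ is the minimum size of a total dominating set. A set $D\subseteq V(G)$ is a paired dominating set if every vertex outside $D$ has a neighbour in $D$ and the induced subgraph $G[D]$ has a perfect matching; $\gamma_p(G)$ is the minimum size of a paired dominating set. *)

theory Defs
  imports Main
begin

text \<open>A simple graph is given by a vertex set V and a symmetric irreflexive
adjacency relation E (only its restriction to V matters).\<close>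

definition cycle_adj :: "nat \<Rightarrow> nat \<Rightarrow> nat \<Rightarrow> bool" where
  "cycle_adj n i j \<longleftrightarrow> i < n \<and> j < n \<and> (j = (i + 1) mod n \<or> i = (j + 1) mod n) \<and> i \<noteq> j"

definition cycle_verts :: "nat \<Rightarrow> nat set" where
  "cycle_verts n = {0..<n}"

definition cart_adj :: "('a \<Rightarrow> 'a \<Rightarrow> bool) \<Rightarrow> ('b \<Rightarrow> 'b \<Rightarrow> bool) \<Rightarrow> ('a \<times> 'b) \<Rightarrow> ('a \<times> 'b) \<Rightarrow> bool" where
  "cart_adj E1 E2 p q \<longleftrightarrow> (fst p = fst q \<and> E2 (snd p) (snd q)) \<or> (snd p = snd q \<and> E1 (fst p) (fst q))"

definition total_dom_set :: "'a set \<Rightarrow> ('a \<Rightarrow> 'a \<Rightarrow> bool) \<Rightarrow> 'a set \<Rightarrow> bool" where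
  "total_dom_set V E D \<longleftrightarrow> D \<subseteq> V \<and> (\<forall>v\<in>V. \<exists>u\<in>D. E v u)"

definition perfect_matching :: "'a set \<Rightarrow> ('a \<Rightarrow> 'a \<Rightarrow> bool) \<Rightarrow> 'a set set \<Rightarrow> bool" where
  "perfect_matching D E M \<longleftrightarrow>
     (\<forall>e\<in>M. \<exists>u v. e = {u, v} \<and> u \<in> D \<and> v \<in> D \<and> u \<noteq> v \<and> E u v) \<and>
     (\<forall>v\<in>D. \<exists>!e. e \<in> M \<and> v \<in> e)"

definition paired_dom_set :: "'a set \<Rightarrow> ('a \<Rightarrow> 'a \<Rightarrow> bool) \<Rightarrow> 'a set \<Rightarrow> bool" where
  "paired_dom_set V E D \<longleftrightarrow> D \<subseteq> V \<and> (\<forall>v\<in>V - D. \<exists>u\<in>D. E v u) \<and>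
     (\<exists>M. perfect_matching D E M)"

definition total_dom_number :: "'a set \<Rightarrow> ('a \<Rightarrow> 'a \<Rightarrow> bool) \<Rightarrow> nat" where
  "total_dom_number V E = (LEAST k. \<exists>D. total_dom_set V E D \<and> card D = k)"

definition paired_dom_number :: "'a set \<Rightarrow> ('a \<Rightarrow> 'a \<Rightarrow> bool) \<Rightarrow> nat" where
  "paired_dom_number V E = (LEAST k. \<exists>D. paired_dom_set V E D \<and> card D = k)"

end

theory Submission
  imports Defs
begin

text \<open>Every vertex of \<open>C\<^sub>n \<times> C\<^sub>4\<close> has degree 4, so double counting the pairs
(vertex, neighbour in \<open>D\<close>) shows \<open>4n \<le> 4|D|\<close> for every total dominating set \<open>D\<close>.
Equality would give every vertex exactly one neighbour in \<open>D\<close>; then \<open>D\<close> induces a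
perfect matching and \<open>|D|\<close> is even, impossible for odd \<open>n\<close>. Conversely, take in each
even column \<open>a\<close> the adjacent rows \<open>a mod 4\<close> and \<open>a mod 4 + 1\<close>: these \<open>n + 1\<close>
vertices are matched within their columns, and the two even columns next to an odd column
carry the row pairs \<open>{0, 1}\<close> and \<open>{2, 3}\<close>, so the odd column is dominated as well.
A paired dominating set is total dominating, so both numbers equal \<open>n + 1\<close>.\<close>

lemma symp_cycle_adj: "symp (cycle_adj n)"
  by (rule sympI) (auto simp: cycle_adj_def)

lemma irreflp_cycle_adj: "irreflp (cycle_adj n)"
  by (rule irreflpI) (simp add: cycle_adj_def)

lemma symp_cart_adj: "symp E1 \<Longrightarrow> symp E2 \<Longrightarrow> symp (cart_adj E1 E2)"
  by (rule sympI) (auto simp: cart_adj_def dest: sympD)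

lemma irreflp_cart_adj: "irreflp E1 \<Longrightarrow> irreflp E2 \<Longrightarrow> irreflp (cart_adj E1 E2)"
  by (rule irreflpI) (auto simp: cart_adj_def dest: irreflpD)

lemma cycle_adj_Suc: "Suc i < n \<Longrightarrow> cycle_adj n i (Suc i)"
  by (simp add: cycle_adj_def)

lemma cycle_adj_cases:
  assumes "cycle_adj n j i"
  shows "j = (i + 1) mod n \<or> j = (i + n - 1) mod n"
proof -
  from assms have "j < n" and "j = (i + 1) mod n \<or> i = (j + 1) mod n"
    by (auto simp: cycle_adj_def)
  moreover have "j = (i + n - 1) mod n" if "i = (j + 1) mod n"
  proof -
    have "(i + (n - 1)) mod n = (j + 1 + (n - 1)) mod n"
      using that by (simp add: mod_add_left_eq)
    also have "\<dots> = j" using \<open>j < n\<close> by simp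
    finally show ?thesis using \<open>j < n\<close> by simp
  qed
  ultimately show ?thesis by blast
qed

lemma card_cycle_nbhd_le: "card {j \<in> cycle_verts n. cycle_adj n j i} \<le> 2"
proof -
  have "{j \<in> cycle_verts n. cycle_adj n j i} \<subseteq> {(i + 1) mod n, (i + n - 1) mod n}"
    using cycle_adj_cases by blast
  then have "card {j \<in> cycle_verts n. cycle_adj n j i} \<le> card {(i + 1) mod n, (i + n - 1) mod n}"
    by (rule card_mono[rotated]) simp
  also have "\<dots> \<le> 2" by (simp add: card_insert_le_m1)
  finally show ?thesis .
qed

lemma card_cart_nbhd_le:
  assumes "finite V1" "finite V2"
  shows "card {v \<in> V1 \<times> V2. cart_adj E1 E2 v u}
    \<le> card {x \<in> V1. E1 x (fst u)} + card {y \<in> V2. E2 y (snd u)}"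
proof -
  have "{v \<in> V1 \<times> V2. cart_adj E1 E2 v u}
      \<subseteq> {x \<in> V1. E1 x (fst u)} \<times> {snd u} \<union> {fst u} \<times> {y \<in> V2. E2 y (snd u)}"
    by (auto simp: cart_adj_def)
  then have "card {v \<in> V1 \<times> V2. cart_adj E1 E2 v u}
      \<le> card ({x \<in> V1. E1 x (fst u)} \<times> {snd u} \<union> {fst u} \<times> {y \<in> V2. E2 y (snd u)})"
    by (rule card_mono[rotated]) (use assms in simp)
  also have "\<dots> \<le> card {x \<in> V1. E1 x (fst u)} + card {y \<in> V2. E2 y (snd u)}"
    by (rule order.trans[OF card_Un_le]) (simp add: card_cartesian_product)
  finally show ?thesis .
qed

lemma perfect_matching_disjoint_edges:
  assumes "\<And>e. e \<in> M \<Longrightarrow> \<exists>u v. e = {u, v} \<and> u \<noteq> v \<and> E u v" and "pairwise disjnt M"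
  shows "perfect_matching (\<Union>M) E M"
  unfolding perfect_matching_def
proof (intro conjI ballI)
  fix e assume "e \<in> M"
  then show "\<exists>u v. e = {u, v} \<and> u \<in> \<Union>M \<and> v \<in> \<Union>M \<and> u \<noteq> v \<and> E u v"
    using assms(1) by blast
next
  fix v assume "v \<in> \<Union>M"
  then obtain e where "e \<in> M" "v \<in> e" by blast
  moreover have "e' = e" if "e' \<in> M" "v \<in> e'" for e'
    using assms(2) that \<open>e \<in> M\<close> \<open>v \<in> e\<close> unfolding pairwise_def disjnt_def by blast
  ultimately show "\<exists>!e. e \<in> M \<and> v \<in> e" by blast
qed

lemma unique_nbr_perfect_matching:
  assumes "symp E" "irreflp E" and uniq: "\<And>v. v \<in> D \<Longrightarrow> \<exists>!u. u \<in> D \<and> E v u"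
  shows "perfect_matching D E {{u, w} |u w. u \<in> D \<and> w \<in> D \<and> E u w}"
  unfolding perfect_matching_def
proof (intro conjI ballI)
  fix e assume "e \<in> {{u, w} |u w. u \<in> D \<and> w \<in> D \<and> E u w}"
  then show "\<exists>u w. e = {u, w} \<and> u \<in> D \<and> w \<in> D \<and> u \<noteq> w \<and> E u w"
    using irreflpD[OF \<open>irreflp E\<close>] by blast
next
  fix v assume "v \<in> D"
  then obtain w where w: "w \<in> D" "E v w" using uniq by blast
  show "\<exists>!e. e \<in> {{u, w} |u w. u \<in> D \<and> w \<in> D \<and> E u w} \<and> v \<in> e"
  proof (rule ex1I[of _ "{v, w}"])
    show "{v, w} \<in> {{u, w} |u w. u \<in> D \<and> w \<in> D \<and> E u w} \<and> v \<in> {v, w}"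
      using \<open>v \<in> D\<close> w by blast
  next
    fix e assume "e \<in> {{u, w} |u w. u \<in> D \<and> w \<in> D \<and> E u w} \<and> v \<in> e"
    then obtain x y where e: "e = {x, y}" "x \<in> D" "y \<in> D" "E x y" "v = x \<or> v = y"
      by blast
    then show "e = {v, w}"
      using uniq[OF \<open>v \<in> D\<close>] w sympD[OF \<open>symp E\<close>] by blast
  qed
qed

lemma card_perfect_matching:
  assumes "perfect_matching D E M" "finite D"
  shows "card D = 2 * card M"
proof -
  have edge: "\<And>e. e \<in> M \<Longrightarrow> \<exists>u v. e = {u, v} \<and> u \<in> D \<and> v \<in> D \<and> u \<noteq> v \<and> E u v"
    and cover: "\<And>v. v \<in> D \<Longrightarrow> \<exists>!e. e \<in> M \<and> v \<in> e"
    using assms(1) by (simp_all add: perfect_matching_def)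
  have "M \<subseteq> Pow D" using edge by blast
  then have "finite M" using \<open>finite D\<close> by (rule finite_subset[OF _ finite_Pow_iff[THEN iffD2]])
  have "\<Union>M \<subseteq> D" using edge by blast
  moreover have "D \<subseteq> \<Union>M" using cover by blast
  moreover have "2 * card M = card (\<Union>M)"
  proof (rule card_partition)
    show "finite M" by fact
    show "finite (\<Union>M)" using \<open>\<Union>M \<subseteq> D\<close> \<open>finite D\<close> by (rule finite_subset)
    show "card e = 2" if "e \<in> M" for e using edge[OF that] by auto
    show "e1 \<inter> e2 = {}" if "e1 \<in> M" "e2 \<in> M" "e1 \<noteq> e2" for e1 e2
    proof (rule ccontr)
      assume "e1 \<inter> e2 \<noteq> {}"
      then obtain x where "x \<in> e1" "x \<in> e2" by blast
      then have "x \<in> D" using \<open>\<Union>M \<subseteq> D\<close> \<open>e1 \<in> M\<close> by blast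
      then show False using cover that \<open>x \<in> e1\<close> \<open>x \<in> e2\<close> by blast
    qed
  qed
  ultimately show ?thesis by simp
qed

lemma paired_dom_imp_total_dom:
  assumes "symp E" "paired_dom_set V E D"
  shows "total_dom_set V E D"
proof -
  obtain M where DV: "D \<subseteq> V" and dom: "\<forall>v\<in>V - D. \<exists>u\<in>D. E v u"
    and pm: "perfect_matching D E M"
    using assms(2) by (auto simp: paired_dom_set_def)
  have "\<exists>u\<in>D. E v u" if "v \<in> D" for v
  proof -
    obtain e where "e \<in> M" "v \<in> e" using pm \<open>v \<in> D\<close> by (auto simp: perfect_matching_def)
    then obtain x y where "e = {x, y}" "x \<in> D" "y \<in> D" "E x y"
      using pm by (auto simp: perfect_matching_def)
    then show ?thesis using \<open>v \<in> e\<close> sympD[OF \<open>symp E\<close>] by blast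
  qed
  then show ?thesis using DV dom by (auto simp: total_dom_set_def)
qed

lemma one_le_card_dom_nbrs:
  assumes "finite D" "total_dom_set V E D" "v \<in> V"
  shows "1 \<le> card {u \<in> D. E v u}"
  using assms by (auto simp: total_dom_set_def Suc_le_eq card_gt_0_iff)

lemma sum_card_dom_nbrs_le:
  assumes "finite V" "D \<subseteq> V" and deg: "\<And>u. u \<in> V \<Longrightarrow> card {v \<in> V. E v u} \<le> k"
  shows "(\<Sum>v\<in>V. card {u \<in> D. E v u}) \<le> k * card D"
proof -
  have "finite D" using assms(1,2) by (rule finite_subset[rotated])
  have "(\<Sum>v\<in>V. card {u \<in> D. E v u}) = (\<Sum>u\<in>D. card {v \<in> V. E v u})"
    using sum.swap_restrict[OF \<open>finite V\<close> \<open>finite D\<close>, of "\<lambda>_ _. 1::nat" E] by simp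
  also have "\<dots> \<le> (\<Sum>u\<in>D. k)"
    by (rule sum_mono) (use deg \<open>D \<subseteq> V\<close> in blast)
  finally show ?thesis by (simp add: mult.commute)
qed

lemma card_le_degree_mult_total_dom:
  assumes "finite V" and deg: "\<And>u. u \<in> V \<Longrightarrow> card {v \<in> V. E v u} \<le> k"
    and tds: "total_dom_set V E D"
  shows "card V \<le> k * card D"
proof -
  have DV: "D \<subseteq> V" using tds by (simp add: total_dom_set_def)
  then have "finite D" using \<open>finite V\<close> by (rule finite_subset)
  have "card V = (\<Sum>v\<in>V. 1)" by simp
  also have "\<dots> \<le> (\<Sum>v\<in>V. card {u \<in> D. E v u})"
    by (rule sum_mono) (rule one_le_card_dom_nbrs[OF \<open>finite D\<close> tds])
  also have "\<dots> \<le> k * card D" using \<open>finite V\<close> DV deg by (rule sum_card_dom_nbrs_le)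
  finally show ?thesis .
qed

lemma total_dom_tight_unique_nbr:
  assumes "finite V" and deg: "\<And>u. u \<in> V \<Longrightarrow> card {v \<in> V. E v u} \<le> k"
    and tds: "total_dom_set V E D" and tight: "card V = k * card D" and "v \<in> V"
  shows "\<exists>!u. u \<in> D \<and> E v u"
proof -
  let ?d = "\<lambda>v. card {u \<in> D. E v u}"
  have DV: "D \<subseteq> V" using tds by (simp add: total_dom_set_def)
  then have "finite D" using \<open>finite V\<close> by (rule finite_subset)
  have pos: "1 \<le> ?d w" if "w \<in> V" for w
    using \<open>finite D\<close> tds that by (rule one_le_card_dom_nbrs)
  have "(\<Sum>w\<in>V. ?d w) \<le> (\<Sum>w\<in>V. 1)"
    using sum_card_dom_nbrs_le[OF \<open>finite V\<close> DV deg] tight by simp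
  then have "(\<Sum>w\<in>V. 1) = (\<Sum>w\<in>V. ?d w)"
    using sum_mono[of V "\<lambda>_. 1" ?d] pos by simp
  then have "1 = ?d v"
    by (rule sum_mono_inv) (use pos \<open>v \<in> V\<close> \<open>finite V\<close> in auto)
  then obtain u where "{u \<in> D. E v u} = {u}" by (metis card_1_singletonE)
  then show ?thesis by (metis (no_types, lifting) mem_Collect_eq singletonD singletonI)
qed

lemma Least_card_eqI:
  assumes "P D" "card D = m" and "\<And>D'. P D' \<Longrightarrow> m \<le> card D'"
  shows "(LEAST k. \<exists>D. P D \<and> card D = k) = m"
  by (rule Least_equality) (use assms in blast)+

lemma card_total_dom_cycle_C4_ge:
  assumes "odd n"
    and tds: "total_dom_set (cycle_verts n \<times> cycle_verts 4) (cart_adj (cycle_adj n) (cycle_adj 4)) D"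
  shows "n + 1 \<le> card D"
proof -
  let ?V = "cycle_verts n \<times> cycle_verts 4" and ?E = "cart_adj (cycle_adj n) (cycle_adj 4)"
  have fin: "finite ?V" by (simp add: cycle_verts_def)
  have DV: "D \<subseteq> ?V" using tds by (simp add: total_dom_set_def)
  have deg: "card {v \<in> ?V. ?E v u} \<le> 4" for u
    using card_cart_nbhd_le[of "cycle_verts n" "cycle_verts 4" "cycle_adj n" "cycle_adj 4" u]
      card_cycle_nbhd_le[of n "fst u"] card_cycle_nbhd_le[of 4 "snd u"]
    by (simp add: cycle_verts_def)
  have card_V: "card ?V = 4 * n" by (simp add: cycle_verts_def card_cartesian_product)
  have "4 * n \<le> 4 * card D"
    using card_le_degree_mult_total_dom[OF fin deg tds] card_V by simp
  moreover have "card D \<noteq> n"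
  proof
    assume "card D = n"
    have "\<exists>!u. u \<in> D \<and> ?E v u" if "v \<in> D" for v
      by (rule total_dom_tight_unique_nbr[OF fin deg tds])
        (use card_V \<open>card D = n\<close> DV that in auto)
    then have "perfect_matching D ?E {{u, w} |u w. u \<in> D \<and> w \<in> D \<and> ?E u w}"
      by (intro unique_nbr_perfect_matching symp_cart_adj irreflp_cart_adj
          symp_cycle_adj irreflp_cycle_adj)
    moreover have "finite D" using DV fin by (rule finite_subset)
    ultimately have "even (card D)" by (auto dest: card_perfect_matching)
    then show False using \<open>card D = n\<close> \<open>odd n\<close> by simp
  qed
  ultimately show ?thesis by simp
qed

lemma cycle4_adj_edge_end:
  assumes "c < 3" "b < 4"
  shows "cycle_adj 4 b c \<or> cycle_adj 4 b (Suc c)"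
proof -
  have "c = 0 \<or> c = 1 \<or> c = 2" "b = 0 \<or> b = 1 \<or> b = 2 \<or> b = 3" using assms by auto
  then show ?thesis unfolding cycle_adj_def by (elim disjE) simp_all
qed

definition column_pair :: "nat \<Rightarrow> (nat \<times> nat) set" where
  "column_pair a = {(a, a mod 4), (a, Suc (a mod 4))}"

definition column_pairing :: "nat \<Rightarrow> (nat \<times> nat) set set" where
  "column_pairing n = column_pair ` {a. a < n \<and> even a}"

lemma perfect_matching_column_pairing:
  "perfect_matching (\<Union>(column_pairing n)) (cart_adj (cycle_adj n) (cycle_adj 4)) (column_pairing n)"
proof (rule perfect_matching_disjoint_edges)
  fix e assume "e \<in> column_pairing n"
  then obtain a where "even a" and e: "e = column_pair a" by (auto simp: column_pairing_def)
  then have "Suc (a mod 4) < 4" by presburger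
  then show "\<exists>u v. e = {u, v} \<and> u \<noteq> v \<and> cart_adj (cycle_adj n) (cycle_adj 4) u v"
    unfolding e column_pair_def
    by (intro exI[of _ "(a, a mod 4)"] exI[of _ "(a, Suc (a mod 4))"])
      (simp add: cart_adj_def cycle_adj_Suc)
next
  show "pairwise disjnt (column_pairing n)"
    by (auto simp: pairwise_def disjnt_def column_pairing_def column_pair_def)
qed

lemma card_column_pairing:
  assumes "odd n"
  shows "card (column_pairing n) = (n + 1) div 2"
proof -
  have "inj_on column_pair UNIV" by (rule injI) (auto simp: column_pair_def)
  then have "card (column_pairing n) = card {a. a < n \<and> even a}"
    unfolding column_pairing_def by (auto intro: card_image inj_on_subset)
  also have "{a. a < n \<and> even a} = (\<lambda>i. 2 * i) ` {..<(n + 1) div 2}"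
    using assms by (auto elim!: evenE) presburger+
  also have "card \<dots> = (n + 1) div 2" by (simp add: card_image inj_on_def)
  finally show ?thesis .
qed

lemma total_dom_column_pairing:
  assumes "odd n"
  shows "total_dom_set (cycle_verts n \<times> cycle_verts 4) (cart_adj (cycle_adj n) (cycle_adj 4))
    (\<Union>(column_pairing n))"
  unfolding total_dom_set_def
proof (intro conjI ballI)
  show "\<Union>(column_pairing n) \<subseteq> cycle_verts n \<times> cycle_verts 4"
    by (auto simp: column_pairing_def column_pair_def cycle_verts_def) presburger+
next
  let ?E = "cart_adj (cycle_adj n) (cycle_adj 4)"
  have col: "column_pair a \<subseteq> \<Union>(column_pairing n)" if "a < n" "even a" for a
    using that by (auto simp: column_pairing_def)
  fix v assume "v \<in> cycle_verts n \<times> cycle_verts 4"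
  then obtain a b where v: "v = (a, b)" and "a < n" "b < 4" by (auto simp: cycle_verts_def)
  show "\<exists>u\<in>\<Union>(column_pairing n). ?E v u"
  proof (cases "even a")
    case True
    have "a mod 4 < 3" using True by presburger
    then have "cycle_adj 4 b (a mod 4) \<or> cycle_adj 4 b (Suc (a mod 4))"
      using \<open>b < 4\<close> by (rule cycle4_adj_edge_end)
    then obtain w where "(a, w) \<in> column_pair a" "?E v (a, w)"
      unfolding column_pair_def by (auto simp: v cart_adj_def)
    then show ?thesis using col[OF \<open>a < n\<close> True] by blast
  next
    case False
    then obtain c where a: "a = Suc c" and "even c" by (cases a) auto
    then have "Suc (Suc c) < n" "even (Suc (Suc c))" using \<open>a < n\<close> \<open>odd n\<close> by presburger+
    have rows: "c mod 4 = 0 \<and> Suc (Suc c) mod 4 = 2 \<or> c mod 4 = 2 \<and> Suc (Suc c) mod 4 = 0"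
      using \<open>even c\<close> by presburger
    have "b = 0 \<or> b = 1 \<or> b = 2 \<or> b = 3" using \<open>b < 4\<close> by auto
    then have "(c, b) \<in> column_pair c \<or> (Suc (Suc c), b) \<in> column_pair (Suc (Suc c))"
      using rows by (auto simp: column_pair_def)
    moreover have "?E v (c, b)" "?E v (Suc (Suc c), b)"
      using cycle_adj_Suc[of c n] cycle_adj_Suc[of "Suc c" n] symp_cycle_adj[of n]
        \<open>Suc (Suc c) < n\<close> by (auto simp: v a cart_adj_def dest: sympD)
    moreover have "column_pair c \<subseteq> \<Union>(column_pairing n)"
      "column_pair (Suc (Suc c)) \<subseteq> \<Union>(column_pairing n)"
      using col \<open>even c\<close> \<open>even (Suc (Suc c))\<close> \<open>Suc (Suc c) < n\<close> by simp_all
    ultimately show ?thesis by blast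
  qed
qed

lemma card_Union_column_pairing:
  assumes "odd n"
  shows "card (\<Union>(column_pairing n)) = n + 1"
proof -
  have "finite (\<Union>(column_pairing n))"
    by (auto simp: column_pairing_def column_pair_def)
  then have "card (\<Union>(column_pairing n)) = 2 * card (column_pairing n)"
    by (rule card_perfect_matching[OF perfect_matching_column_pairing])
  then show ?thesis using card_column_pairing[OF assms] assms by simp
qed

theorem lemma4p1:
  fixes n :: nat
  assumes "n \<ge> 3" and "n mod 4 = 1 \<or> n mod 4 = 3"
  shows "paired_dom_number (cycle_verts n \<times> cycle_verts 4) (cart_adj (cycle_adj n) (cycle_adj 4)) = n + 1
    \<and> total_dom_number (cycle_verts n \<times> cycle_verts 4) (cart_adj (cycle_adj n) (cycle_adj 4)) = n + 1"
proof -
  let ?V = "cycle_verts n \<times> cycle_verts 4" and ?E = "cart_adj (cycle_adj n) (cycle_adj 4)"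
  have "odd n" using assms(2) by presburger
  have tds: "total_dom_set ?V ?E (\<Union>(column_pairing n))"
    using \<open>odd n\<close> by (rule total_dom_column_pairing)
  then have pds: "paired_dom_set ?V ?E (\<Union>(column_pairing n))"
    using perfect_matching_column_pairing by (auto simp: paired_dom_set_def total_dom_set_def)
  have symp: "symp ?E" by (intro symp_cart_adj symp_cycle_adj)
  note card = card_Union_column_pairing[OF \<open>odd n\<close>]
  note lower = card_total_dom_cycle_C4_ge[OF \<open>odd n\<close>]
  show ?thesis
    unfolding paired_dom_number_def total_dom_number_def
    using Least_card_eqI[of "paired_dom_set ?V ?E", OF pds card]
      Least_card_eqI[of "total_dom_set ?V ?E", OF tds card]
      lower paired_dom_imp_total_dom[OF symp]
    by blast
qed

end
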